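(* Fix $s\in\mathfrak{S}$ and the objects in the context. Let $\widetilde p$ denote the joint distribution of $(\widetilde U^{1:N},\widetilde X^{1:N},\widetilde Y^{1:N},\widetilde Z^{1:N}(s))$ produced by the block construction described in the context, and let $q_{U^{1:N}X^{1:N}Y^{1:N}Z^{1:N}(s)}\triangleq\prod_{i=1}^N q_{UXYZ(s)}$. Then $$\mathbb{D}\big(q_{U^{1:N}X^{1:N}Y^{1:N}Z^{1:N}(s)}\,\big\|\,\widetilde p_{U^{1:N}X^{1:N}Y^{1:N}Z^{1:N}(s)}\big)\leq 2LK\delta_K.$$
   Context: Let $q_{UX}$ be a pmf on $\{0,1\}^2$, and $p_{YZ(s)|X}$ a channel with finite output alphabets; set $q_{UXYZ(s)}=q_{UX}p_{YZ(s)|X}$. Let $K$ be a power of two, $L\in\mathbb{N}$, $N=KL$, $G_K=\begin{bmatrix}1&0\\1&1\end{bmatrix}^{\otimes\log_2 K}$ over $\mathrm{GF}(2)$ (so $G_K^{-1}=G_K$). For $(U^{1:K},X^{1:K})\sim\prod_{i=1}^K q_{UX}$ let $A^{1:K}=U^{1:K}G_K$, $V^{1:K}=X^{1:K}G_K$. Let $\delta_K=2^{-K^\beta}$ with $\beta\in(0,1/2)$, $\mathcal{V}_U=\{i: H(A^i|A^{1:i-1})>1-\delta_K\}$, $\mathcal{V}_{X|U}=\{i: H(V^i|V^{1:i-1}U^{1:K})>1-\delta_K\}$. Construction of one block: there are $L$ mutually independent sub-blocks $l=1,\dots,L$. In each sub-block, $\widetilde A^{1:K}$ is generated as follows: the bits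 $\widetilde A^{1:K}[\mathcal{V}_U]$ are set to a uniformly distributed string (of length $|\mathcal{V}_U|$, independent across sub-blocks and of all other randomness), and for $j\notin\mathcal{V}_U$, in increasing order of $j$, $\widetilde A^j$ is drawn according to $q_{A^j|A^{1:j-1}}(\cdot|\widetilde A^{1:j-1})$; then $\widetilde U^{1:K}=\widetilde A^{1:K}G_K$. Next, $\widetilde V^{1:K}$ is drawn successively: for $j\in\mathcal{V}_{X|U}$, $\widetilde V^j$ is a uniform bit, and for $j\notin\mathcal{V}_{X|U}$, $\widetilde V^j\sim q_{V^j|V^{1:j-1}U^{1:K}}(\cdot|\widetilde V^{1:j-1},\widetilde U^{1:K})$; set $\widetilde X^{1:K}=\widetilde V^{1:K}G_K$, and let $(\widetilde Y^{1:K},\widetilde Z^{1:K}(s))$ be the output of $K$ independent uses of $p_{YZ(s)|X}$ with input $\widetilde X^{1:K}$. The length-$N$ sequences $\widetilde U^{1:N},\widetilde X^{1:N},\widetilde Y^{1:N},\widetilde Z^{1:N}(s)$ are the concatenations over the $L$ sub-blocks. $\mathbb{D}$ denotes Kullback–Leibler divergence. *)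

theory Defs
  imports "HOL-Probability.Probability"
begin

definition coin :: "bool pmf" where
  "coin = bernoulli_pmf (1/2)"

fun seq_pmf :: "'a pmf list \<Rightarrow> 'a list pmf" where
  "seq_pmf [] = return_pmf []"
| "seq_pmf (p # ps) = bind_pmf p (\<lambda>a. map_pmf (\<lambda>as. a # as) (seq_pmf ps))"

fun succ_gen :: "nat \<Rightarrow> (nat \<Rightarrow> bool list \<Rightarrow> bool pmf) \<Rightarrow> bool list pmf" where
  "succ_gen 0 f = return_pmf []"
| "succ_gen (Suc j) f = bind_pmf (succ_gen j f) (\<lambda>w. map_pmf (\<lambda>b. w @ [b]) (f j w))"

text \<open>Entries of the kernel F = [[1,0],[1,1]] (row a, column b, a b in {0,1}).\<close>
definition kern_F :: "nat \<Rightarrow> nat \<Rightarrow> bool" where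
  "kern_F a b = (b \<le> a)"

text \<open>Entries (row i, column j, 0-based) of G_K = F^{\<otimes> n}, K = 2^n, over GF(2)
  (True = 1), via F^{\<otimes>(n+1)} = F \<otimes> F^{\<otimes> n}.\<close>
fun polarG :: "nat \<Rightarrow> nat \<Rightarrow> nat \<Rightarrow> bool" where
  "polarG 0 i j = True"
| "polarG (Suc n) i j =
     (kern_F (i div 2^n) (j div 2^n) \<and> polarG n (i mod 2^n) (j mod 2^n))"

text \<open>Row vector u (length 2^n) times G_K over GF(2).\<close>
definition polar :: "nat \<Rightarrow> bool list \<Rightarrow> bool list" where
  "polar n u = map (\<lambda>j. odd (card {i. i < 2^n \<and> u ! i \<and> polarG n i j})) [0..<2^n]"

definition iid_UX :: "(bool \<times> bool) pmf \<Rightarrow> nat \<Rightarrow> (bool list \<times> bool list) pmf" where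
  "iid_UX q K = map_pmf (\<lambda>ps. (map fst ps, map snd ps)) (seq_pmf (replicate K q))"

definition cond_ent :: "('a \<times> 'b) pmf \<Rightarrow> real" where
  "cond_ent p = - (\<Sum>ab\<in>set_pmf p. pmf p ab * log 2 (pmf p ab / pmf (map_pmf snd p) (snd ab)))"

text \<open>Conditional law of a bit g under p given the event C; convention: a fair
  coin if C has probability zero.\<close>
definition cond_on :: "'c pmf \<Rightarrow> ('c \<Rightarrow> bool) \<Rightarrow> 'c set \<Rightarrow> bool pmf" where
  "cond_on p g C = (if set_pmf p \<inter> C = {} then coin else map_pmf g (cond_pmf p C))"

text \<open>H(A^i | A^{1:i-1}) and H(V^i | V^{1:i-1} U^{1:K}), indices 0-based.\<close>
definition H_A :: "(bool \<times> bool) pmf \<Rightarrow> nat \<Rightarrow> nat \<Rightarrow> real" where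
  "H_A q n i = cond_ent (map_pmf (\<lambda>(u, x). (polar n u ! i, take i (polar n u))) (iid_UX q (2^n)))"

definition H_V :: "(bool \<times> bool) pmf \<Rightarrow> nat \<Rightarrow> nat \<Rightarrow> real" where
  "H_V q n i = cond_ent (map_pmf (\<lambda>(u, x). (polar n x ! i, (take i (polar n x), u))) (iid_UX q (2^n)))"

definition V_U :: "(bool \<times> bool) pmf \<Rightarrow> nat \<Rightarrow> real \<Rightarrow> nat set" where
  "V_U q n \<delta> = {i. i < 2^n \<and> H_A q n i > 1 - \<delta>}"

definition V_XU :: "(bool \<times> bool) pmf \<Rightarrow> nat \<Rightarrow> real \<Rightarrow> nat set" where
  "V_XU q n \<delta> = {i. i < 2^n \<and> H_V q n i > 1 - \<delta>}"

definition subblock :: "(bool \<times> bool) pmf \<Rightarrow> (bool \<Rightarrow> ('y \<times> 'z) pmf) \<Rightarrow> nat \<Rightarrow> real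
    \<Rightarrow> (bool list \<times> bool list \<times> 'y list \<times> 'z list) pmf" where
  "subblock q W n \<delta> =
    bind_pmf
      (succ_gen (2^n) (\<lambda>j w. if j \<in> V_U q n \<delta> then coin
         else cond_on (iid_UX q (2^n)) (\<lambda>(u', x'). polar n u' ! j)
                {(u', x'). take j (polar n u') = w}))
      (\<lambda>a. let u = polar n a in
        bind_pmf
          (succ_gen (2^n) (\<lambda>j w. if j \<in> V_XU q n \<delta> then coin
             else cond_on (iid_UX q (2^n)) (\<lambda>(u', x'). polar n x' ! j)
                    {(u', x'). take j (polar n x') = w \<and> u' = u}))
          (\<lambda>v. let x = polar n v in
             map_pmf (\<lambda>yz. (u, x, map fst yz, map snd yz)) (seq_pmf (map W x))))"

definition block :: "(bool \<times> bool) pmf \<Rightarrow> (bool \<Rightarrow> ('y \<times> 'z) pmf) \<Rightarrow> nat \<Rightarrow> real \<Rightarrow> nat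
    \<Rightarrow> (bool list \<times> bool list \<times> 'y list \<times> 'z list) pmf" where
  "block q W n \<delta> L =
    map_pmf (\<lambda>bs. (concat (map (\<lambda>b. fst b) bs), concat (map (\<lambda>b. fst (snd b)) bs),
                   concat (map (\<lambda>b. fst (snd (snd b))) bs), concat (map (\<lambda>b. snd (snd (snd b))) bs)))
      (seq_pmf (replicate L (subblock q W n \<delta>)))"

definition q_UXYZ :: "(bool \<times> bool) pmf \<Rightarrow> (bool \<Rightarrow> ('y \<times> 'z) pmf) \<Rightarrow> (bool \<times> bool \<times> 'y \<times> 'z) pmf" where
  "q_UXYZ q W = bind_pmf q (\<lambda>(u, x). map_pmf (\<lambda>(y, z). (u, x, y, z)) (W x))"

definition iid_UXYZ :: "(bool \<times> bool) pmf \<Rightarrow> (bool \<Rightarrow> ('y \<times> 'z) pmf) \<Rightarrow> nat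
    \<Rightarrow> (bool list \<times> bool list \<times> 'y list \<times> 'z list) pmf" where
  "iid_UXYZ q W N =
    map_pmf (\<lambda>ts. (map fst ts, map (\<lambda>t. fst (snd t)) ts, map (\<lambda>t. fst (snd (snd t))) ts,
                   map (\<lambda>t. snd (snd (snd t))) ts))
      (seq_pmf (replicate N (q_UXYZ q W)))"

definition KL :: "'a pmf \<Rightarrow> 'a pmf \<Rightarrow> ereal" where
  "KL p r = (if \<exists>x\<in>set_pmf p. pmf r x = 0 then \<infinity>
             else ereal (\<Sum>x\<in>set_pmf p. pmf p x * log 2 (pmf p x / pmf r x)))"

end

(* Under the i.i.d. law, A = U G_K and V = X G_K can themselves be produced by
   successive generation: each bit of A is drawn from its true conditional law given the
   previous bits, then each bit of V given the previous bits and U; since G_K is an involution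
   over GF(2), U and X are recovered as A G_K and V G_K. The constructed sub-block differs only
   in that the bits indexed by V_U and V_{X|U} are fair coins. By the chain rule, the divergence
   between the two sub-block laws is therefore the sum, over these positions, of the expected
   divergence of the true conditional bit law from a fair coin, which equals
   1 - H(bit | past) < delta_K. There are at most 2K such positions; the divergence is additive
   over the L independent sub-blocks, and concatenation is injective. *)

theory Submission
  imports Defs "HOL-Library.Z2"
begin

section \<open>The polar transform is an involution\<close>

text \<open>Keep ring arithmetic on \<^typ>\<open>bit\<close> instead of rewriting it to \<open>and\<close>/\<open>xor\<close>.\<close>
declare mult_bit_eq_and[simp del] add_bit_eq_xor[simp del]

text \<open>Kept separate from \<^const>\<open>of_bool\<close> so that the simplifier does not turn sums of
  matrix entries into cardinalities.\<close>
definition polarG_bit :: "nat \<Rightarrow> nat \<Rightarrow> nat \<Rightarrow> bit" where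
  "polarG_bit n i j = of_bool (polarG n i j)"

lemma of_nat_bit: "(of_nat m :: bit) = of_bool (odd m)"
  by (induction m) auto

lemma sum_lessThan_double:
  fixes f :: "nat \<Rightarrow> 'a::comm_monoid_add"
  shows "(\<Sum>j<m + m. f j) = (\<Sum>j<m. f j) + (\<Sum>j<m. f (j + m))"
  by (simp add: atLeast0LessThan[symmetric] sum.atLeastLessThan_concat[of 0 m "m + m", symmetric]
      sum.shift_bounds_nat_ivl[of f 0 m m, simplified])

lemma polarG_Suc_low:
  assumes "j < 2^n"
  shows "polarG (Suc n) i j = polarG n (i mod 2^n) j"
    and "polarG (Suc n) j k = (k div 2^n = 0 \<and> polarG n j (k mod 2^n))"
  using assms by (auto simp: kern_F_def)

lemma polarG_Suc_high:
  assumes "j < 2^n"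
  shows "polarG (Suc n) i (j + 2^n) = (1 \<le> i div 2^n \<and> polarG n (i mod 2^n) j)"
    and "k < 2^Suc n \<Longrightarrow> polarG (Suc n) (j + 2^n) k = polarG n j (k mod 2^n)"
proof -
  show "polarG (Suc n) i (j + 2^n) = (1 \<le> i div 2^n \<and> polarG n (i mod 2^n) j)"
    using assms by (simp add: kern_F_def)
  assume "k < 2^Suc n"
  then have "k div 2^n < 2" by (simp add: less_mult_imp_div_less mult.commute)
  then show "polarG (Suc n) (j + 2^n) k = polarG n j (k mod 2^n)"
    using assms by (simp add: kern_F_def)
qed

lemma polarG_bit_involution:
  assumes "i < 2^n" "k < 2^n"
  shows "(\<Sum>j<2^n. polarG_bit n i j * polarG_bit n j k) = of_bool (i = k)"
  using assms
proof (induction n arbitrary: i k)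
  case 0
  then show ?case by (simp add: polarG_bit_def)
next
  case (Suc n)
  define M :: nat where "M = 2^n"
  let ?S = "\<Sum>j<M. polarG_bit n (i mod M) j * polarG_bit n j (k mod M)"
  have IH: "?S = of_bool (i mod M = k mod M)"
    using Suc.IH[of "i mod M" "k mod M"] by (simp add: M_def)
  have low: "(\<Sum>j<M. polarG_bit (Suc n) i j * polarG_bit (Suc n) j k) = of_bool (k div M = 0) * ?S"
    unfolding sum_distrib_left
    by (rule sum.cong) (simp_all add: polarG_bit_def polarG_Suc_low M_def of_bool_conj mult_ac del: polarG.simps)
  have high: "(\<Sum>j<M. polarG_bit (Suc n) i (j + M) * polarG_bit (Suc n) (j + M) k)
      = of_bool (1 \<le> i div M) * ?S"
    unfolding sum_distrib_left using Suc.prems(2)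
    by (intro sum.cong) (simp_all add: polarG_bit_def polarG_Suc_high M_def of_bool_conj mult_ac del: polarG.simps)
  have hi: "i div M < 2" "k div M < 2"
    using Suc.prems by (simp_all add: M_def less_mult_imp_div_less mult.commute)
  have "(\<Sum>j<2^Suc n. polarG_bit (Suc n) i j * polarG_bit (Suc n) j k)
      = (of_bool (k div M = 0) + of_bool (1 \<le> i div M)) * ?S"
    by (simp only: M_def[symmetric] power_Suc mult_2 sum_lessThan_double low high distrib_right)
  also have "\<dots> = of_bool (i div M = k div M \<and> i mod M = k mod M)"
    using hi by (auto simp: IH less_Suc_eq)
  also have "(i div M = k div M \<and> i mod M = k mod M) \<longleftrightarrow> i = k"
    by (metis div_mult_mod_eq)
  finally show ?case .
qed

lemma length_polar [simp]: "length (polar n u) = 2^n"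
  by (simp add: polar_def)

lemma of_bool_polar_nth:
  assumes "j < 2^n"
  shows "(of_bool (polar n u ! j) :: bit) = (\<Sum>i<2^n. of_bool (u ! i) * polarG_bit n i j)"
proof -
  have "{..<2^n} \<inter> {i. u ! i \<and> polarG n i j} = {i. i < 2^n \<and> u ! i \<and> polarG n i j}" by auto
  then show ?thesis
    using assms by (simp add: polar_def polarG_bit_def of_nat_bit flip: of_bool_conj)
qed

lemma polar_polar: "length u = 2^n \<Longrightarrow> polar n (polar n u) = u"
proof (rule nth_equalityI)
  fix k assume "length u = 2^n" "k < length (polar n (polar n u))"
  then have k: "k < 2^n" by simp
  have "(of_bool (polar n (polar n u) ! k) :: bit)
      = (\<Sum>j<2^n. (\<Sum>i<2^n. of_bool (u ! i) * polarG_bit n i j) * polarG_bit n j k)"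
    using k by (simp add: of_bool_polar_nth)
  also have "\<dots> = (\<Sum>i<2^n. of_bool (u ! i) * (\<Sum>j<2^n. polarG_bit n i j * polarG_bit n j k))"
    by (simp only: sum_distrib_left sum_distrib_right mult.assoc) (rule sum.swap)
  also have "\<dots> = (\<Sum>i<2^n. if i = k then of_bool (u ! k) else 0)"
    using k by (intro sum.cong) (auto simp: polarG_bit_involution)
  also have "\<dots> = of_bool (u ! k)"
    using k by simp
  finally show "polar n (polar n u) ! k = u ! k" by (simp only: of_bool_eq_iff)
qed simp

lemma inj_on_polar: "inj_on (polar n) {u. length u = 2^n}"
proof (rule inj_onI)
  fix u v assume "u \<in> {u. length u = 2^n}" "v \<in> {u. length u = 2^n}" "polar n u = polar n v"
  then show "u = v" by (metis mem_Collect_eq polar_polar)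
qed

section \<open>Divergence of finitely supported distributions\<close>

definition kl_div :: "'a pmf \<Rightarrow> 'a pmf \<Rightarrow> real" where
  "kl_div p r = (\<Sum>x\<in>set_pmf p. pmf p x * log 2 (pmf p x / pmf r x))"

definition finitely_dominated :: "'a pmf \<Rightarrow> 'a pmf \<Rightarrow> bool" where
  "finitely_dominated p r \<longleftrightarrow> finite (set_pmf p) \<and> set_pmf p \<subseteq> set_pmf r"

lemma KL_eq_kl_div: "set_pmf p \<subseteq> set_pmf r \<Longrightarrow> KL p r = ereal (kl_div p r)"
  unfolding KL_def kl_div_def by (auto simp: set_pmf_iff)

lemma kl_div_self [simp]: "kl_div p p = 0"
  unfolding kl_div_def by (rule sum.neutral) (auto simp: set_pmf_iff)

lemma finitely_dominated_refl: "finite (set_pmf p) \<Longrightarrow> finitely_dominated p p"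
  by (simp add: finitely_dominated_def)

lemma finitely_dominated_map_pmf:
  "finitely_dominated p r \<Longrightarrow> finitely_dominated (map_pmf h p) (map_pmf h r)"
  by (auto simp: finitely_dominated_def)

lemma finitely_dominated_bind_pmf:
  assumes "finitely_dominated p r" "\<And>a. a \<in> set_pmf p \<Longrightarrow> finitely_dominated (f a) (g a)"
  shows "finitely_dominated (bind_pmf p f) (bind_pmf r g)"
  using assms by (fastforce simp: finitely_dominated_def)

lemma kl_div_map_pmf_inj:
  assumes inj: "inj_on h (set_pmf r)" and sub: "set_pmf p \<subseteq> set_pmf r"
  shows "kl_div (map_pmf h p) (map_pmf h r) = kl_div p r"
proof -
  have inj_p: "inj_on h (set_pmf p)" using inj sub by (rule inj_on_subset)
  have "kl_div (map_pmf h p) (map_pmf h r)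
      = (\<Sum>x\<in>set_pmf p. pmf (map_pmf h p) (h x) * log 2 (pmf (map_pmf h p) (h x) / pmf (map_pmf h r) (h x)))"
    unfolding kl_div_def set_map_pmf by (rule sum.reindex[OF inj_p, unfolded comp_def])
  also have "\<dots> = kl_div p r"
    unfolding kl_div_def using inj inj_p sub by (intro sum.cong refl) (auto simp: pmf_map_inj)
  finally show ?thesis .
qed

lemma expectation_finite_pmf:
  "finite (set_pmf p) \<Longrightarrow> measure_pmf.expectation p F = (\<Sum>a\<in>set_pmf p. pmf p a * F a)"
  by (subst integral_measure_pmf_real[of "set_pmf p"]) (auto simp: mult.commute)

lemma pmf_bind_Pair: "pmf (bind_pmf p (\<lambda>a. map_pmf (Pair a) (f a))) (a, b) = pmf p a * pmf (f a) b"
proof -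
  have "pmf (bind_pmf p (\<lambda>a. map_pmf (Pair a) (f a))) (a, b)
      = (\<Sum>a'\<in>{a}. pmf (map_pmf (Pair a') (f a')) (a, b) * pmf p a')"
    unfolding pmf_bind by (rule integral_measure_pmf_real) (auto simp: pmf_eq_0_set_pmf)
  moreover have "pmf (map_pmf (Pair a) (f a)) (a, b) = pmf (f a) b"
    by (rule pmf_map_inj') (auto simp: inj_on_def)
  ultimately show ?thesis by simp
qed

lemma set_pmf_bind_Pair:
  "set_pmf (bind_pmf p (\<lambda>a. map_pmf (Pair a) (f a))) = Sigma (set_pmf p) (\<lambda>a. set_pmf (f a))"
  by auto

lemma kl_div_bind_Pair:
  assumes dom: "finitely_dominated p r" and dom_f: "\<And>a. a \<in> set_pmf p \<Longrightarrow> finitely_dominated (f a) (g a)"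
  shows "kl_div (bind_pmf p (\<lambda>a. map_pmf (Pair a) (f a))) (bind_pmf r (\<lambda>a. map_pmf (Pair a) (g a)))
       = kl_div p r + (\<Sum>a\<in>set_pmf p. pmf p a * kl_div (f a) (g a))"
proof -
  have fin: "finite (set_pmf p)" and sub: "set_pmf p \<subseteq> set_pmf r"
    using dom by (auto simp: finitely_dominated_def)
  have fin_f: "finite (set_pmf (f a))" and sub_f: "set_pmf (f a) \<subseteq> set_pmf (g a)" if "a \<in> set_pmf p" for a
    using dom_f[OF that] by (auto simp: finitely_dominated_def)
  let ?L = "\<lambda>a b. log 2 (pmf p a / pmf r a) + log 2 (pmf (f a) b / pmf (g a) b)"
  have log_split: "log 2 ((pmf p a * pmf (f a) b) / (pmf r a * pmf (g a) b)) = ?L a b"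
    if "a \<in> set_pmf p" "b \<in> set_pmf (f a)" for a b
  proof -
    have "pmf p a > 0" "pmf r a > 0" "pmf (f a) b > 0" "pmf (g a) b > 0"
      using that sub sub_f[OF that(1)] by (auto simp: pmf_positive)
    then show ?thesis by (simp add: log_divide_pos log_mult_pos)
  qed
  have "kl_div (bind_pmf p (\<lambda>a. map_pmf (Pair a) (f a))) (bind_pmf r (\<lambda>a. map_pmf (Pair a) (g a)))
      = (\<Sum>(a, b)\<in>Sigma (set_pmf p) (\<lambda>a. set_pmf (f a)). pmf p a * pmf (f a) b * ?L a b)"
    unfolding kl_div_def set_pmf_bind_Pair
    by (intro sum.cong refl) (clarsimp simp: pmf_bind_Pair log_split)
  also have "\<dots> = (\<Sum>a\<in>set_pmf p. \<Sum>b\<in>set_pmf (f a). pmf p a * pmf (f a) b * ?L a b)"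
    using fin fin_f by (subst sum.Sigma) auto
  also have "\<dots> = (\<Sum>a\<in>set_pmf p. pmf p a * log 2 (pmf p a / pmf r a) * (\<Sum>b\<in>set_pmf (f a). pmf (f a) b)
                 + pmf p a * kl_div (f a) (g a))"
    by (intro sum.cong refl)
      (simp add: kl_div_def distrib_left sum.distrib sum_distrib_left sum_distrib_right mult_ac)
  also have "\<dots> = kl_div p r + (\<Sum>a\<in>set_pmf p. pmf p a * kl_div (f a) (g a))"
    using fin_f by (simp add: sum_pmf_eq_1 kl_div_def sum.distrib)
  finally show ?thesis .
qed

lemma kl_div_bind_map_inj:
  assumes dom: "finitely_dominated p r" and dom_f: "\<And>a. a \<in> set_pmf p \<Longrightarrow> finitely_dominated (f a) (g a)"
    and inj: "inj_on (case_prod h) (Sigma (set_pmf r) (\<lambda>a. set_pmf (g a)))"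
  shows "kl_div (bind_pmf p (\<lambda>a. map_pmf (h a) (f a))) (bind_pmf r (\<lambda>a. map_pmf (h a) (g a)))
       = kl_div p r + (\<Sum>a\<in>set_pmf p. pmf p a * kl_div (f a) (g a))"
proof -
  have pair: "bind_pmf p (\<lambda>a. map_pmf (h a) (f a)) = map_pmf (case_prod h) (bind_pmf p (\<lambda>a. map_pmf (Pair a) (f a)))"
    for p f by (simp add: map_bind_pmf map_pmf_comp)
  have "set_pmf (bind_pmf p (\<lambda>a. map_pmf (Pair a) (f a))) \<subseteq> set_pmf (bind_pmf r (\<lambda>a. map_pmf (Pair a) (g a)))"
    using dom dom_f by (simp only: set_pmf_bind_Pair) (auto simp: finitely_dominated_def)
  with inj show ?thesis
    unfolding pair[of p f] pair[of r g] set_pmf_bind_Pair[symmetric]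
    by (simp only: kl_div_map_pmf_inj kl_div_bind_Pair[OF dom dom_f])
qed

lemma length_succ_gen: "w \<in> set_pmf (succ_gen j f) \<Longrightarrow> length w = j"
  by (induction j arbitrary: w) auto

lemma finite_set_pmf_succ_gen: "finite (set_pmf (succ_gen j f))"
  by (induction j) auto

lemma finitely_dominated_succ_gen:
  assumes "\<And>i w. set_pmf (f i w) \<subseteq> set_pmf (g i w)"
  shows "finitely_dominated (succ_gen j f) (succ_gen j g)"
proof (induction j)
  case (Suc j)
  show ?case
    unfolding succ_gen.simps
    by (intro finitely_dominated_bind_pmf finitely_dominated_map_pmf Suc)
      (simp add: finitely_dominated_def assms)
qed (simp add: finitely_dominated_def)

lemma kl_div_succ_gen:
  assumes "\<And>i w. set_pmf (f i w) \<subseteq> set_pmf (g i w)"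
  shows "kl_div (succ_gen j f) (succ_gen j g)
       = (\<Sum>i<j. \<Sum>w\<in>set_pmf (succ_gen i f). pmf (succ_gen i f) w * kl_div (f i w) (g i w))"
proof (induction j)
  case (Suc j)
  have "inj_on (case_prod (\<lambda>w b. w @ [b])) X" for X :: "(bool list \<times> bool) set"
    by (auto simp: inj_on_def)
  moreover have "finitely_dominated (f j w) (g j w)" for w
    using assms by (simp add: finitely_dominated_def)
  ultimately show ?case
    using Suc by (simp add: kl_div_bind_map_inj finitely_dominated_succ_gen[OF assms])
qed (simp add: kl_div_def)

lemma finite_set_seq_pmf:
  "(\<And>p. p \<in> set ps \<Longrightarrow> finite (set_pmf p)) \<Longrightarrow> finite (set_pmf (seq_pmf ps))"
  by (induction ps) auto

lemma finitely_dominated_seq_pmf_replicate: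
  "finitely_dominated p r \<Longrightarrow> finitely_dominated (seq_pmf (replicate L p)) (seq_pmf (replicate L r))"
  by (induction L) (auto intro!: finitely_dominated_bind_pmf finitely_dominated_map_pmf simp: finitely_dominated_def)

lemma kl_div_seq_pmf_replicate:
  assumes dom: "finitely_dominated p r"
  shows "kl_div (seq_pmf (replicate L p)) (seq_pmf (replicate L r)) = real L * kl_div p r"
proof (induction L)
  case (Suc L)
  have "inj_on (case_prod Cons) X" for X :: "('a \<times> 'a list) set"
    by (auto simp: inj_on_def)
  then have "kl_div (seq_pmf (replicate (Suc L) p)) (seq_pmf (replicate (Suc L) r))
      = kl_div p r + (\<Sum>a\<in>set_pmf p. pmf p a) * (real L * kl_div p r)"
    using dom by (simp add: kl_div_bind_map_inj finitely_dominated_seq_pmf_replicate Suc sum_distrib_right)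
  then show ?case
    using dom by (simp add: sum_pmf_eq_1 finitely_dominated_def algebra_simps)
qed (simp add: kl_div_def)

section \<open>Conditioning and successive generation\<close>

lemma measure_cond_pmf:
  assumes "set_pmf p \<inter> A \<noteq> {}"
  shows "measure_pmf.prob (cond_pmf p A) B = measure_pmf.prob p (A \<inter> B) / measure_pmf.prob p A"
proof -
  have "measure_pmf (cond_pmf p A) = uniform_measure (measure_pmf p) A"
    by (rule cond_pmf.rep_eq[OF assms])
  then show ?thesis
    by (simp add: measure_uniform_measure emeasure_measure_pmf_not_zero[OF assms] measure_pmf.emeasure_finite)
qed

lemma cond_pmf_cond_pmf:
  assumes "set_pmf p \<inter> (A \<inter> B) \<noteq> {}"
  shows "cond_pmf (cond_pmf p A) B = cond_pmf p (A \<inter> B)"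
proof (rule pmf_eqI)
  fix x
  have A: "set_pmf p \<inter> A \<noteq> {}" using assms by auto
  then have B: "set_pmf (cond_pmf p A) \<inter> B \<noteq> {}" using assms by auto
  have "measure_pmf.prob p A > 0" using A by (auto intro: measure_pmf_posI)
  then show "pmf (cond_pmf (cond_pmf p A) B) x = pmf (cond_pmf p (A \<inter> B)) x"
    by (simp add: pmf_cond[OF B] pmf_cond[OF A] pmf_cond[OF assms] measure_cond_pmf[OF A])
qed

lemma cond_pmf_UNIV [simp]: "cond_pmf p UNIV = p"
  by (rule pmf_eqI) (simp add: pmf_cond set_pmf_not_empty)

lemma bind_cond_pmf_fibres: "bind_pmf (map_pmf t p) (\<lambda>w. cond_pmf p {c. t c = w}) = p"
  by (rule bind_cond_pmf_cancel) (auto simp: vimage_def)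

lemma expectation_eq_sum_cond_pmf:
  assumes "finite (set_pmf p)"
  shows "measure_pmf.expectation p F
       = (\<Sum>k\<in>set_pmf (map_pmf \<psi> p). pmf (map_pmf \<psi> p) k * measure_pmf.expectation (cond_pmf p {c. \<psi> c = k}) F)"
proof -
  have "finite (set_pmf (cond_pmf p {c. \<psi> c = k}))" if "k \<in> set_pmf (map_pmf \<psi> p)" for k
    using that assms by (subst set_cond_pmf) auto
  then show ?thesis
    using assms pmf_expectation_bind[of "set_pmf (map_pmf \<psi> p)" "\<lambda>k. cond_pmf p {c. \<psi> c = k}" "map_pmf \<psi> p" F]
    by (simp add: bind_cond_pmf_fibres)
qed

lemma set_pmf_coin [simp]: "set_pmf coin = UNIV"
  by (simp add: coin_def)

lemma pmf_coin [simp]: "pmf coin b = 1/2"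
  by (simp add: coin_def)

lemma kl_div_coin:
  "finite (set_pmf p) \<Longrightarrow> kl_div (map_pmf \<beta> p) coin = measure_pmf.expectation p (\<lambda>c. log 2 (2 * pmf (map_pmf \<beta> p) (\<beta> c)))"
  using expectation_finite_pmf[of "map_pmf \<beta> p" "\<lambda>b. log 2 (2 * pmf (map_pmf \<beta> p) b)"]
  by (simp add: kl_div_def mult.commute)

lemma cond_ent_eq_expectation:
  assumes "finite (set_pmf p)"
  shows "cond_ent (map_pmf (\<lambda>c. (\<beta> c, \<tau> c)) p)
       = - measure_pmf.expectation p (\<lambda>c. log 2 (pmf (map_pmf (\<lambda>c. (\<beta> c, \<tau> c)) p) (\<beta> c, \<tau> c) / pmf (map_pmf \<tau> p) (\<tau> c)))"
proof -
  have "map_pmf snd (map_pmf (\<lambda>c. (\<beta> c, \<tau> c)) p) = map_pmf \<tau> p"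
    by (simp add: map_pmf_comp)
  then show ?thesis
    using assms expectation_finite_pmf[of "map_pmf (\<lambda>c. (\<beta> c, \<tau> c)) p"
        "\<lambda>x. log 2 (pmf (map_pmf (\<lambda>c. (\<beta> c, \<tau> c)) p) x / pmf (map_pmf \<tau> p) (snd x))"]
    by (simp add: cond_ent_def)
qed

lemma kl_div_coin_cond_pmf:
  fixes \<beta> :: "'c \<Rightarrow> bool"
  assumes fin: "finite (set_pmf p)" and ne: "set_pmf p \<inter> {c. \<tau> c = t} \<noteq> {}"
  shows "kl_div (map_pmf \<beta> (cond_pmf p {c. \<tau> c = t})) coin
       = measure_pmf.expectation (cond_pmf p {c. \<tau> c = t})
           (\<lambda>c. log 2 (2 * (pmf (map_pmf (\<lambda>c. (\<beta> c, \<tau> c)) p) (\<beta> c, \<tau> c) / pmf (map_pmf \<tau> p) (\<tau> c))))"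
  (is "_ = measure_pmf.expectation ?C _")
proof -
  have "measure_pmf.expectation ?C (\<lambda>c. log 2 (2 * pmf (map_pmf \<beta> ?C) (\<beta> c)))
      = measure_pmf.expectation ?C
          (\<lambda>c. log 2 (2 * (pmf (map_pmf (\<lambda>c. (\<beta> c, \<tau> c)) p) (\<beta> c, \<tau> c) / pmf (map_pmf \<tau> p) (\<tau> c))))"
  proof (intro Bochner_Integration.integral_cong_AE AE_pmfI)
    fix c assume "c \<in> set_pmf ?C"
    then have "\<tau> c = t" using ne by simp
    moreover have "{c'. \<tau> c' = t} \<inter> \<beta> -` {\<beta> c} = (\<lambda>c. (\<beta> c, \<tau> c)) -` {(\<beta> c, t)}" by auto
    ultimately show "log 2 (2 * pmf (map_pmf \<beta> ?C) (\<beta> c))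
        = log 2 (2 * (pmf (map_pmf (\<lambda>c. (\<beta> c, \<tau> c)) p) (\<beta> c, \<tau> c) / pmf (map_pmf \<tau> p) (\<tau> c)))"
      by (simp add: pmf_map measure_cond_pmf[OF ne] vimage_def)
  qed simp_all
  then show ?thesis
    using fin ne by (simp add: kl_div_coin)
qed

lemma one_minus_cond_ent_eq_kl_div_coin:
  fixes \<beta> :: "'c \<Rightarrow> bool"
  assumes fin: "finite (set_pmf p)"
  shows "1 - cond_ent (map_pmf (\<lambda>c. (\<beta> c, \<tau> c)) p)
       = (\<Sum>t\<in>set_pmf (map_pmf \<tau> p). pmf (map_pmf \<tau> p) t * kl_div (map_pmf \<beta> (cond_pmf p {c. \<tau> c = t})) coin)"
proof -
  define J where "J = map_pmf (\<lambda>c. (\<beta> c, \<tau> c)) p"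
  define F where "F c = log 2 (2 * (pmf J (\<beta> c, \<tau> c) / pmf (map_pmf \<tau> p) (\<tau> c)))" for c
  have "measure_pmf.expectation p F
      = measure_pmf.expectation p (\<lambda>c. 1 + log 2 (pmf J (\<beta> c, \<tau> c) / pmf (map_pmf \<tau> p) (\<tau> c)))"
  proof (intro Bochner_Integration.integral_cong_AE AE_pmfI)
    fix c assume "c \<in> set_pmf p"
    then have "pmf J (\<beta> c, \<tau> c) > 0" "pmf (map_pmf \<tau> p) (\<tau> c) > 0"
      by (auto simp: J_def pmf_positive)
    then show "F c = 1 + log 2 (pmf J (\<beta> c, \<tau> c) / pmf (map_pmf \<tau> p) (\<tau> c))"
      unfolding F_def by (subst log_mult_pos) auto
  qed simp_all
  also have "\<dots> = 1 - cond_ent J"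
    using fin by (simp add: J_def cond_ent_eq_expectation expectation_finite_pmf sum.distrib
        distrib_left sum_pmf_eq_1 sum_subtractf)
  finally have "1 - cond_ent J = measure_pmf.expectation p F" ..
  also have "\<dots> = (\<Sum>t\<in>set_pmf (map_pmf \<tau> p). pmf (map_pmf \<tau> p) t * measure_pmf.expectation (cond_pmf p {c. \<tau> c = t}) F)"
    using fin by (rule expectation_eq_sum_cond_pmf)
  also have "\<dots> = (\<Sum>t\<in>set_pmf (map_pmf \<tau> p). pmf (map_pmf \<tau> p) t * kl_div (map_pmf \<beta> (cond_pmf p {c. \<tau> c = t})) coin)"
  proof (intro sum.cong refl arg_cong2[where f = "(*)"])
    fix t assume "t \<in> set_pmf (map_pmf \<tau> p)"
    then have "set_pmf p \<inter> {c. \<tau> c = t} \<noteq> {}" by auto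
    then show "measure_pmf.expectation (cond_pmf p {c. \<tau> c = t}) F = kl_div (map_pmf \<beta> (cond_pmf p {c. \<tau> c = t})) coin"
      unfolding F_def J_def by (rule kl_div_coin_cond_pmf[OF fin, symmetric])
  qed
  finally show ?thesis by (simp add: J_def)
qed

definition cond_bit :: "'c pmf \<Rightarrow> ('c \<Rightarrow> bool list) \<Rightarrow> ('c \<Rightarrow> 'k) \<Rightarrow> 'k \<Rightarrow> nat \<Rightarrow> bool list \<Rightarrow> bool pmf" where
  "cond_bit p \<phi> \<psi> k i w = cond_on p (\<lambda>c. \<phi> c ! i) {c. take i (\<phi> c) = w \<and> \<psi> c = k}"

definition frozen_cond_bit ::
    "'c pmf \<Rightarrow> ('c \<Rightarrow> bool list) \<Rightarrow> ('c \<Rightarrow> 'k) \<Rightarrow> nat set \<Rightarrow> 'k \<Rightarrow> nat \<Rightarrow> bool list \<Rightarrow> bool pmf" where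
  "frozen_cond_bit p \<phi> \<psi> S k i w = (if i \<in> S then coin else cond_bit p \<phi> \<psi> k i w)"

lemma set_cond_bit_subset: "set_pmf (cond_bit p \<phi> \<psi> k i w) \<subseteq> set_pmf (frozen_cond_bit p \<phi> \<psi> S k i w)"
  by (simp add: frozen_cond_bit_def)

lemma cond_bit_eq_map_pmf:
  assumes "set_pmf p \<inter> {c. take i (\<phi> c) = w \<and> \<psi> c = k} \<noteq> {}"
  shows "cond_bit p \<phi> \<psi> k i w = map_pmf (\<lambda>c. \<phi> c ! i) (cond_pmf p {c. take i (\<phi> c) = w \<and> \<psi> c = k})"
  using assms by (simp add: cond_bit_def cond_on_def)

lemma succ_gen_cond_bit:
  assumes len: "\<forall>c\<in>set_pmf p. length (\<phi> c) = K" and k: "k \<in> \<psi> ` set_pmf p" and j: "j \<le> K"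
  shows "succ_gen j (cond_bit p \<phi> \<psi> k) = map_pmf (\<lambda>c. take j (\<phi> c)) (cond_pmf p {c. \<psi> c = k})"
  using j
proof (induction j)
  case (Suc j)
  define p\<^sub>k where "p\<^sub>k = cond_pmf p {c. \<psi> c = k}"
  have ne: "set_pmf p \<inter> {c. \<psi> c = k} \<noteq> {}" using k by auto
  have IH: "succ_gen j (cond_bit p \<phi> \<psi> k) = map_pmf (\<lambda>c. take j (\<phi> c)) p\<^sub>k"
    using Suc by (simp add: p\<^sub>k_def)
  have step: "map_pmf (\<lambda>c. take (Suc j) (\<phi> c)) (cond_pmf p\<^sub>k {c. take j (\<phi> c) = w})
      = map_pmf (\<lambda>b. w @ [b]) (cond_bit p \<phi> \<psi> k j w)"
    if "w \<in> set_pmf (map_pmf (\<lambda>c. take j (\<phi> c)) p\<^sub>k)" for w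
  proof -
    define E where "E = {c. take j (\<phi> c) = w \<and> \<psi> c = k}"
    have neE: "set_pmf p \<inter> E \<noteq> {}" using that ne by (auto simp: p\<^sub>k_def E_def)
    have "{c. \<psi> c = k} \<inter> {c. take j (\<phi> c) = w} = E" by (auto simp: E_def)
    then have "cond_pmf p\<^sub>k {c. take j (\<phi> c) = w} = cond_pmf p E"
      using neE by (simp add: p\<^sub>k_def cond_pmf_cond_pmf)
    moreover have "map_pmf (\<lambda>c. take (Suc j) (\<phi> c)) (cond_pmf p E) = map_pmf (\<lambda>c. w @ [\<phi> c ! j]) (cond_pmf p E)"
      using neE len Suc.prems by (intro map_pmf_cong) (auto simp: E_def take_Suc_conv_app_nth)
    ultimately show ?thesis
      using neE by (simp add: cond_bit_eq_map_pmf E_def[symmetric] map_pmf_comp)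
  qed
  have "map_pmf (\<lambda>c. take (Suc j) (\<phi> c)) p\<^sub>k
      = bind_pmf (map_pmf (\<lambda>c. take j (\<phi> c)) p\<^sub>k)
          (\<lambda>w. map_pmf (\<lambda>c. take (Suc j) (\<phi> c)) (cond_pmf p\<^sub>k {c. take j (\<phi> c) = w}))"
    unfolding map_bind_pmf[symmetric] bind_cond_pmf_fibres ..
  also have "\<dots> = succ_gen (Suc j) (cond_bit p \<phi> \<psi> k)"
    unfolding succ_gen.simps IH by (intro bind_pmf_cong refl step)
  finally show ?case by (simp add: p\<^sub>k_def)
qed simp

lemma succ_gen_cond_bit_full:
  assumes len: "\<forall>c\<in>set_pmf p. length (\<phi> c) = K" and k: "k \<in> \<psi> ` set_pmf p"
  shows "succ_gen K (cond_bit p \<phi> \<psi> k) = map_pmf \<phi> (cond_pmf p {c. \<psi> c = k})"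
proof -
  have "set_pmf p \<inter> {c. \<psi> c = k} \<noteq> {}" using k by auto
  then have "map_pmf (\<lambda>c. take K (\<phi> c)) (cond_pmf p {c. \<psi> c = k}) = map_pmf \<phi> (cond_pmf p {c. \<psi> c = k})"
    using len by (intro map_pmf_cong) auto
  then show ?thesis
    using succ_gen_cond_bit[OF len k le_refl] by simp
qed

lemma succ_gen_cond_bit_unit:
  assumes "\<forall>c\<in>set_pmf p. length (\<phi> c) = K"
  shows "succ_gen K (cond_bit p \<phi> (\<lambda>_. ()) ()) = map_pmf \<phi> p"
proof -
  have "() \<in> (\<lambda>_. ()) ` set_pmf p" using set_pmf_not_empty[of p] by blast
  from succ_gen_cond_bit_full[OF assms this] show ?thesis by simp
qed

lemma sum_prefix_law_eq_succ_gen: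
  assumes fin: "finite (set_pmf p)" and len: "\<forall>c\<in>set_pmf p. length (\<phi> c) = K" and i: "i \<le> K"
  shows "(\<Sum>t\<in>set_pmf (map_pmf (\<lambda>c. (take i (\<phi> c), \<psi> c)) p). pmf (map_pmf (\<lambda>c. (take i (\<phi> c), \<psi> c)) p) t * h t)
       = (\<Sum>k\<in>set_pmf (map_pmf \<psi> p). pmf (map_pmf \<psi> p) k *
           (\<Sum>w\<in>set_pmf (succ_gen i (cond_bit p \<phi> \<psi> k)). pmf (succ_gen i (cond_bit p \<phi> \<psi> k)) w * h (w, k)))"
proof -
  have "(\<Sum>t\<in>set_pmf (map_pmf (\<lambda>c. (take i (\<phi> c), \<psi> c)) p). pmf (map_pmf (\<lambda>c. (take i (\<phi> c), \<psi> c)) p) t * h t)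
      = (\<Sum>k\<in>set_pmf (map_pmf \<psi> p). pmf (map_pmf \<psi> p) k *
          measure_pmf.expectation (cond_pmf p {c. \<psi> c = k}) (\<lambda>c. h (take i (\<phi> c), \<psi> c)))"
    using fin expectation_finite_pmf[of "map_pmf (\<lambda>c. (take i (\<phi> c), \<psi> c)) p" h]
    by (simp add: expectation_eq_sum_cond_pmf[of p _ \<psi>])
  also have "\<dots> = (\<Sum>k\<in>set_pmf (map_pmf \<psi> p). pmf (map_pmf \<psi> p) k *
      measure_pmf.expectation (succ_gen i (cond_bit p \<phi> \<psi> k)) (\<lambda>w. h (w, k)))"
  proof (intro sum.cong refl arg_cong2[where f = "(*)"])
    fix k assume k: "k \<in> set_pmf (map_pmf \<psi> p)"
    then have "set_pmf p \<inter> {c. \<psi> c = k} \<noteq> {}" by auto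
    then have "measure_pmf.expectation (cond_pmf p {c. \<psi> c = k}) (\<lambda>c. h (take i (\<phi> c), \<psi> c))
        = measure_pmf.expectation (cond_pmf p {c. \<psi> c = k}) (\<lambda>c. h (take i (\<phi> c), k))"
      by (intro Bochner_Integration.integral_cong_AE AE_pmfI) auto
    also have "\<dots> = measure_pmf.expectation (succ_gen i (cond_bit p \<phi> \<psi> k)) (\<lambda>w. h (w, k))"
      using k succ_gen_cond_bit[OF len _ i, of k \<psi>] by simp
    finally show "measure_pmf.expectation (cond_pmf p {c. \<psi> c = k}) (\<lambda>c. h (take i (\<phi> c), \<psi> c))
        = measure_pmf.expectation (succ_gen i (cond_bit p \<phi> \<psi> k)) (\<lambda>w. h (w, k))" .
  qed
  finally show ?thesis
    by (simp add: expectation_finite_pmf finite_set_pmf_succ_gen)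
qed

lemma expected_kl_div_cond_bit_coin:
  assumes fin: "finite (set_pmf p)" and len: "\<forall>c\<in>set_pmf p. length (\<phi> c) = K" and i: "i < K"
  shows "(\<Sum>k\<in>set_pmf (map_pmf \<psi> p). pmf (map_pmf \<psi> p) k *
           (\<Sum>w\<in>set_pmf (succ_gen i (cond_bit p \<phi> \<psi> k)).
              pmf (succ_gen i (cond_bit p \<phi> \<psi> k)) w * kl_div (cond_bit p \<phi> \<psi> k i w) coin))
         = 1 - cond_ent (map_pmf (\<lambda>c. (\<phi> c ! i, (take i (\<phi> c), \<psi> c))) p)"
proof -
  define \<tau> where "\<tau> c = (take i (\<phi> c), \<psi> c)" for c
  have "1 - cond_ent (map_pmf (\<lambda>c. (\<phi> c ! i, \<tau> c)) p)
      = (\<Sum>t\<in>set_pmf (map_pmf \<tau> p). pmf (map_pmf \<tau> p) t * kl_div (cond_bit p \<phi> \<psi> (snd t) i (fst t)) coin)"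
    unfolding one_minus_cond_ent_eq_kl_div_coin[OF fin]
  proof (intro sum.cong refl arg_cong2[where f = "(*)"])
    fix t assume "t \<in> set_pmf (map_pmf \<tau> p)"
    then have "set_pmf p \<inter> {c. take i (\<phi> c) = fst t \<and> \<psi> c = snd t} \<noteq> {}"
      by (auto simp: \<tau>_def)
    moreover have "{c. \<tau> c = t} = {c. take i (\<phi> c) = fst t \<and> \<psi> c = snd t}"
      by (auto simp: \<tau>_def)
    ultimately show "kl_div (map_pmf (\<lambda>c. \<phi> c ! i) (cond_pmf p {c. \<tau> c = t})) coin
        = kl_div (cond_bit p \<phi> \<psi> (snd t) i (fst t)) coin"
      by (simp add: cond_bit_eq_map_pmf)
  qed
  then show ?thesis
    unfolding \<tau>_def sum_prefix_law_eq_succ_gen[OF fin len less_imp_le[OF i]] by simp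
qed

lemma kl_div_succ_gen_frozen:
  assumes fin: "finite (set_pmf p)" and len: "\<forall>c\<in>set_pmf p. length (\<phi> c) = K" and S: "S \<subseteq> {..<K}"
  shows "(\<Sum>k\<in>set_pmf (map_pmf \<psi> p). pmf (map_pmf \<psi> p) k *
            kl_div (succ_gen K (cond_bit p \<phi> \<psi> k)) (succ_gen K (frozen_cond_bit p \<phi> \<psi> S k)))
       = (\<Sum>i\<in>S. 1 - cond_ent (map_pmf (\<lambda>c. (\<phi> c ! i, (take i (\<phi> c), \<psi> c))) p))"
proof -
  define X where "X k i = (\<Sum>w\<in>set_pmf (succ_gen i (cond_bit p \<phi> \<psi> k)).
      pmf (succ_gen i (cond_bit p \<phi> \<psi> k)) w * kl_div (cond_bit p \<phi> \<psi> k i w) coin)" for k i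
  have "kl_div (succ_gen K (cond_bit p \<phi> \<psi> k)) (succ_gen K (frozen_cond_bit p \<phi> \<psi> S k)) = (\<Sum>i\<in>S. X k i)" for k
  proof -
    have "kl_div (succ_gen K (cond_bit p \<phi> \<psi> k)) (succ_gen K (frozen_cond_bit p \<phi> \<psi> S k))
        = (\<Sum>i<K. if i \<in> S then X k i else 0)"
      unfolding kl_div_succ_gen[OF set_cond_bit_subset]
      by (intro sum.cong refl) (simp add: frozen_cond_bit_def X_def)
    also have "\<dots> = (\<Sum>i\<in>S. X k i)"
      using S by (simp add: sum.If_cases Int_absorb1)
    finally show ?thesis .
  qed
  then have "(\<Sum>k\<in>set_pmf (map_pmf \<psi> p). pmf (map_pmf \<psi> p) k *
            kl_div (succ_gen K (cond_bit p \<phi> \<psi> k)) (succ_gen K (frozen_cond_bit p \<phi> \<psi> S k)))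
      = (\<Sum>i\<in>S. \<Sum>k\<in>set_pmf (map_pmf \<psi> p). pmf (map_pmf \<psi> p) k * X k i)"
    by (simp add: sum_distrib_left sum.swap[of _ S])
  also have "\<dots> = (\<Sum>i\<in>S. 1 - cond_ent (map_pmf (\<lambda>c. (\<phi> c ! i, (take i (\<phi> c), \<psi> c))) p))"
    unfolding X_def using S by (intro sum.cong refl expected_kl_div_cond_bit_coin[OF fin len]) auto
  finally show ?thesis .
qed

section \<open>Products of distributions and concatenation\<close>

lemma seq_pmf_append:
  "seq_pmf (ps @ qs) = bind_pmf (seq_pmf ps) (\<lambda>as. map_pmf (\<lambda>bs. as @ bs) (seq_pmf qs))"
proof (induction ps)
  case Nil
  show ?case by (simp add: bind_return_pmf map_pmf_idI)
next
  case (Cons p ps)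
  have "(@) (a # as) = (\<lambda>bs. a # as @ bs)" for a :: 'a and as by auto
  then show ?case by (simp add: Cons bind_assoc_pmf bind_map_pmf map_bind_pmf map_pmf_comp)
qed

lemma seq_pmf_concat: "seq_pmf (concat pss) = map_pmf concat (seq_pmf (map seq_pmf pss))"
  by (induction pss) (simp_all add: seq_pmf_append bind_assoc_pmf bind_map_pmf map_bind_pmf map_pmf_comp)

lemma seq_pmf_map_map_pmf:
  "seq_pmf (map (\<lambda>a. map_pmf (h a) (f a)) as) = map_pmf (\<lambda>bs. map2 h as bs) (seq_pmf (map f as))"
  by (induction as) (simp_all add: bind_map_pmf map_bind_pmf map_pmf_comp)

lemma seq_pmf_map_pmf: "seq_pmf (map (map_pmf f) ps) = map_pmf (map f) (seq_pmf ps)"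
  by (induction ps) (simp_all add: bind_map_pmf map_bind_pmf map_pmf_comp)

lemma seq_pmf_replicate_bind:
  "seq_pmf (replicate m (bind_pmf p f)) = bind_pmf (seq_pmf (replicate m p)) (\<lambda>as. seq_pmf (map f as))"
proof (induction m)
  case (Suc m)
  have "seq_pmf (replicate (Suc m) (bind_pmf p f))
      = bind_pmf p (\<lambda>a. bind_pmf (seq_pmf (replicate m p)) (\<lambda>as. bind_pmf (f a) (\<lambda>b. map_pmf (Cons b) (seq_pmf (map f as)))))"
    by (simp add: Suc bind_assoc_pmf map_bind_pmf bind_commute_pmf[of "f _"])
  also have "\<dots> = bind_pmf (seq_pmf (replicate (Suc m) p)) (\<lambda>as. seq_pmf (map f as))"
    by (simp add: bind_assoc_pmf bind_map_pmf)
  finally show ?case .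
qed (simp add: bind_return_pmf)

lemma length_seq_pmf: "xs \<in> set_pmf (seq_pmf ps) \<Longrightarrow> length xs = length ps"
  by (induction ps arbitrary: xs) auto

lemma iid_UXYZ_eq_bind:
  fixes W :: "bool \<Rightarrow> ('y \<times> 'z) pmf"
  shows "iid_UXYZ q W m = bind_pmf (iid_UX q m) (\<lambda>(u, x). map_pmf (\<lambda>yz. (u, x, map fst yz, map snd yz)) (seq_pmf (map W x)))"
proof -
  define g :: "bool \<times> bool \<Rightarrow> 'y \<times> 'z \<Rightarrow> bool \<times> bool \<times> 'y \<times> 'z" where "g c = (\<lambda>(y, z). (fst c, snd c, y, z))" for c
  have q: "q_UXYZ q W = bind_pmf q (\<lambda>c. map_pmf (g c) (W (snd c)))"
    unfolding q_UXYZ_def g_def by (simp add: split_def)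
  have "iid_UXYZ q W m = bind_pmf (seq_pmf (replicate m q)) (\<lambda>cs.
      map_pmf (\<lambda>yz. (map fst cs, map snd cs, map fst yz, map snd yz)) (seq_pmf (map W (map snd cs))))"
    unfolding iid_UXYZ_def q seq_pmf_replicate_bind seq_pmf_map_map_pmf map_bind_pmf map_pmf_comp
  proof (intro bind_pmf_cong refl map_pmf_cong)
    fix cs :: "(bool \<times> bool) list" and yz :: "('y \<times> 'z) list"
    assume "yz \<in> set_pmf (seq_pmf (map W (map snd cs)))"
    then have "length yz = length cs" by (simp add: length_seq_pmf)
    then show "(map fst (map2 g cs yz), map (\<lambda>t. fst (snd t)) (map2 g cs yz),
          map (\<lambda>t. fst (snd (snd t))) (map2 g cs yz), map (\<lambda>t. snd (snd (snd t))) (map2 g cs yz))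
        = (map fst cs, map snd cs, map fst yz, map snd yz)"
      by (simp add: g_def case_prod_beta list_eq_iff_nth_eq)
  qed (simp add: comp_def)
  then show ?thesis
    by (simp add: iid_UX_def bind_map_pmf)
qed

definition unzip4 :: "('a \<times> 'b \<times> 'c \<times> 'd) list \<Rightarrow> 'a list \<times> 'b list \<times> 'c list \<times> 'd list" where
  "unzip4 ts = (map fst ts, map (\<lambda>t. fst (snd t)) ts, map (\<lambda>t. fst (snd (snd t))) ts, map (\<lambda>t. snd (snd (snd t))) ts)"

definition concat4 :: "('a list \<times> 'b list \<times> 'c list \<times> 'd list) list \<Rightarrow> 'a list \<times> 'b list \<times> 'c list \<times> 'd list" where
  "concat4 bs = (concat (map fst bs), concat (map (\<lambda>b. fst (snd b)) bs),
                 concat (map (\<lambda>b. fst (snd (snd b))) bs), concat (map (\<lambda>b. snd (snd (snd b))) bs))"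

lemma unzip4_concat: "unzip4 (concat tss) = concat4 (map unzip4 tss)"
  by (simp add: unzip4_def concat4_def map_concat comp_def)

lemma iid_UXYZ_unzip4: "iid_UXYZ q W m = map_pmf unzip4 (seq_pmf (replicate m (q_UXYZ q W)))"
  by (simp add: iid_UXYZ_def unzip4_def[abs_def])

lemma block_concat4: "block q W n \<delta> L = map_pmf concat4 (seq_pmf (replicate L (subblock q W n \<delta>)))"
  by (simp add: block_def concat4_def[abs_def])

lemma concat_replicate_replicate: "concat (replicate L (replicate K x)) = replicate (K * L) x"
  by (induction L) (simp_all add: replicate_add)

lemma iid_UXYZ_mult: "iid_UXYZ q W (K * L) = map_pmf concat4 (seq_pmf (replicate L (iid_UXYZ q W K)))"
proof -
  have rep: "seq_pmf (replicate L (map_pmf unzip4 p)) = map_pmf (map unzip4) (seq_pmf (replicate L p))" for p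
    using seq_pmf_map_pmf[of unzip4 "replicate L p"] by simp
  show ?thesis
    by (simp add: rep iid_UXYZ_unzip4 seq_pmf_concat map_pmf_comp unzip4_concat flip: concat_replicate_replicate)
qed

lemma set_seq_pmf_replicate: "xs \<in> set_pmf (seq_pmf (replicate L p)) \<Longrightarrow> x \<in> set xs \<Longrightarrow> x \<in> set_pmf p"
  by (induction L arbitrary: xs) auto

lemma map_eq_if_concat_map_eq:
  assumes "length xs = length ys" "\<forall>x\<in>set xs \<union> set ys. length (f x) = K"
    and "concat (map f xs) = concat (map f ys)"
  shows "map f xs = map f ys"
proof -
  have "length (f x) = length (f y)" if "(x, y) \<in> set (zip xs ys)" for x y
    using assms(2) set_zip_leftD[OF that] set_zip_rightD[OF that] by auto
  then show ?thesis
    using assms(1,3) by (subst (asm) concat_eq_concat_iff) (auto simp: zip_map_map)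
qed

lemma inj_on_concat4:
  assumes len: "\<forall>x\<in>set_pmf p. length (fst x) = K \<and> length (fst (snd x)) = K
      \<and> length (fst (snd (snd x))) = K \<and> length (snd (snd (snd x))) = K"
  shows "inj_on concat4 (set_pmf (seq_pmf (replicate L p)))"
proof (rule inj_onI)
  fix bs bs' assume bs: "bs \<in> set_pmf (seq_pmf (replicate L p))" and bs': "bs' \<in> set_pmf (seq_pmf (replicate L p))"
    and eq: "concat4 bs = concat4 bs'"
  have l: "length bs = length bs'" using length_seq_pmf[OF bs] length_seq_pmf[OF bs'] by simp
  have "\<forall>b\<in>set bs \<union> set bs'. b \<in> set_pmf p"
    using set_seq_pmf_replicate[OF bs] set_seq_pmf_replicate[OF bs'] by blast
  with len have len': "\<forall>b\<in>set bs \<union> set bs'. length (fst b) = K \<and> length (fst (snd b)) = K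
      \<and> length (fst (snd (snd b))) = K \<and> length (snd (snd (snd b))) = K" by blast
  have "map fst bs = map fst bs'" "map (\<lambda>b. fst (snd b)) bs = map (\<lambda>b. fst (snd b)) bs'"
    "map (\<lambda>b. fst (snd (snd b))) bs = map (\<lambda>b. fst (snd (snd b))) bs'"
    "map (\<lambda>b. snd (snd (snd b))) bs = map (\<lambda>b. snd (snd (snd b))) bs'"
    using eq l len' by (auto simp: concat4_def intro!: map_eq_if_concat_map_eq[where K = K])
  then show "bs = bs'"
    using l by (simp add: list_eq_iff_nth_eq prod_eq_iff)
qed

section \<open>The sub-block as a successive generation\<close>

definition channel_gen :: "nat \<Rightarrow> (bool \<Rightarrow> ('y \<times> 'z) pmf) \<Rightarrow> (nat \<Rightarrow> bool list \<Rightarrow> bool pmf)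
    \<Rightarrow> (bool list \<times> 'y list \<times> 'z list) pmf" where
  "channel_gen n W g = bind_pmf (succ_gen (2^n) g)
     (\<lambda>v. map_pmf (\<lambda>yz. (polar n v, map fst yz, map snd yz)) (seq_pmf (map W (polar n v))))"

definition subblock_gen :: "nat \<Rightarrow> (bool \<Rightarrow> ('y \<times> 'z) pmf) \<Rightarrow> (nat \<Rightarrow> bool list \<Rightarrow> bool pmf)
    \<Rightarrow> (bool list \<Rightarrow> nat \<Rightarrow> bool list \<Rightarrow> bool pmf) \<Rightarrow> (bool list \<times> bool list \<times> 'y list \<times> 'z list) pmf" where
  "subblock_gen n W f g = bind_pmf (succ_gen (2^n) f) (\<lambda>a. map_pmf (Pair (polar n a)) (channel_gen n W (g (polar n a))))"

lemma kl_div_channel_gen: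
  fixes W :: "bool \<Rightarrow> ('y::finite \<times> 'z::finite) pmf"
  assumes sub: "\<And>i w. set_pmf (g\<^sub>1 i w) \<subseteq> set_pmf (g\<^sub>2 i w)"
  shows "kl_div (channel_gen n W g\<^sub>1) (channel_gen n W g\<^sub>2) = kl_div (succ_gen (2^n) g\<^sub>1) (succ_gen (2^n) g\<^sub>2)"
proof -
  have "inj_on (\<lambda>(v, yz). (polar n v, map fst yz, map snd yz))
      (Sigma (set_pmf (succ_gen (2^n) g\<^sub>2)) (\<lambda>v. set_pmf (seq_pmf (map W (polar n v)))))"
    by (auto intro!: inj_onI dest!: length_succ_gen inj_onD[OF inj_on_polar]) (metis zip_map_fst_snd)
  moreover have "finitely_dominated (seq_pmf (map W x)) (seq_pmf (map W x))" for x
    by (rule finitely_dominated_refl) (simp add: finite_set_seq_pmf)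
  ultimately show ?thesis
    unfolding channel_gen_def using finitely_dominated_succ_gen[OF sub]
    by (simp add: kl_div_bind_map_inj)
qed

lemma kl_div_subblock_gen:
  fixes W :: "bool \<Rightarrow> ('y::finite \<times> 'z::finite) pmf"
  assumes sub_f: "\<And>i w. set_pmf (f\<^sub>1 i w) \<subseteq> set_pmf (f\<^sub>2 i w)"
    and sub_g: "\<And>u i w. set_pmf (g\<^sub>1 u i w) \<subseteq> set_pmf (g\<^sub>2 u i w)"
  shows "finitely_dominated (subblock_gen n W f\<^sub>1 g\<^sub>1) (subblock_gen n W f\<^sub>2 g\<^sub>2)"
    and "kl_div (subblock_gen n W f\<^sub>1 g\<^sub>1) (subblock_gen n W f\<^sub>2 g\<^sub>2)
       = kl_div (succ_gen (2^n) f\<^sub>1) (succ_gen (2^n) f\<^sub>2)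
         + (\<Sum>a\<in>set_pmf (succ_gen (2^n) f\<^sub>1). pmf (succ_gen (2^n) f\<^sub>1) a *
              kl_div (succ_gen (2^n) (g\<^sub>1 (polar n a))) (succ_gen (2^n) (g\<^sub>2 (polar n a))))"
proof -
  have dom_f: "finitely_dominated (succ_gen (2^n) f\<^sub>1) (succ_gen (2^n) f\<^sub>2)"
    by (rule finitely_dominated_succ_gen[OF sub_f])
  have dom_g: "finitely_dominated (channel_gen n W (g\<^sub>1 u)) (channel_gen n W (g\<^sub>2 u))" for u
    unfolding channel_gen_def
    by (intro finitely_dominated_bind_pmf finitely_dominated_succ_gen finitely_dominated_map_pmf
        finitely_dominated_refl sub_g finite_set_seq_pmf) simp
  show "finitely_dominated (subblock_gen n W f\<^sub>1 g\<^sub>1) (subblock_gen n W f\<^sub>2 g\<^sub>2)"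
    unfolding subblock_gen_def by (intro finitely_dominated_bind_pmf finitely_dominated_map_pmf dom_f dom_g)
  have inj: "inj_on (\<lambda>(a, t). (polar n a, t)) (Sigma (set_pmf (succ_gen (2^n) f\<^sub>2)) X)" for X
    by (auto intro!: inj_onI dest!: length_succ_gen inj_onD[OF inj_on_polar])
  show "kl_div (subblock_gen n W f\<^sub>1 g\<^sub>1) (subblock_gen n W f\<^sub>2 g\<^sub>2)
       = kl_div (succ_gen (2^n) f\<^sub>1) (succ_gen (2^n) f\<^sub>2)
         + (\<Sum>a\<in>set_pmf (succ_gen (2^n) f\<^sub>1). pmf (succ_gen (2^n) f\<^sub>1) a *
              kl_div (succ_gen (2^n) (g\<^sub>1 (polar n a))) (succ_gen (2^n) (g\<^sub>2 (polar n a))))"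
    unfolding subblock_gen_def kl_div_bind_map_inj[OF dom_f dom_g inj] kl_div_channel_gen[OF sub_g] ..
qed

lemma subblock_gen_eq_bind:
  "subblock_gen n W f g = bind_pmf (succ_gen (2^n) f) (\<lambda>a. bind_pmf (succ_gen (2^n) (g (polar n a)))
     (\<lambda>v. map_pmf (\<lambda>yz. (polar n a, polar n v, map fst yz, map snd yz)) (seq_pmf (map W (polar n v)))))"
  by (simp add: subblock_gen_def channel_gen_def map_bind_pmf map_pmf_comp)

lemma subblock_eq_subblock_gen:
  "subblock q W n \<delta> = subblock_gen n W
     (frozen_cond_bit (iid_UX q (2^n)) (\<lambda>c. polar n (fst c)) (\<lambda>_. ()) (V_U q n \<delta>) ())
     (frozen_cond_bit (iid_UX q (2^n)) (\<lambda>c. polar n (snd c)) fst (V_XU q n \<delta>))"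
proof -
  have "(\<lambda>j w. if j \<in> V_U q n \<delta> then coin
          else cond_on (iid_UX q (2^n)) (\<lambda>(u', x'). polar n u' ! j) {(u', x'). take j (polar n u') = w})
      = frozen_cond_bit (iid_UX q (2^n)) (\<lambda>c. polar n (fst c)) (\<lambda>_. ()) (V_U q n \<delta>) ()"
    by (intro ext) (simp add: frozen_cond_bit_def cond_bit_def split_def)
  moreover have "(\<lambda>j w. if j \<in> V_XU q n \<delta> then coin
          else cond_on (iid_UX q (2^n)) (\<lambda>(u', x'). polar n x' ! j) {(u', x'). take j (polar n x') = w \<and> u' = u})
      = frozen_cond_bit (iid_UX q (2^n)) (\<lambda>c. polar n (snd c)) fst (V_XU q n \<delta>) u" for u
    by (intro ext) (simp add: frozen_cond_bit_def cond_bit_def split_def)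
  ultimately show ?thesis
    by (simp add: subblock_def subblock_gen_eq_bind Let_def)
qed

lemma length_iid_UX: "c \<in> set_pmf (iid_UX q m) \<Longrightarrow> length (fst c) = m \<and> length (snd c) = m"
  unfolding iid_UX_def by (auto dest: length_seq_pmf)

lemma finite_set_pmf_iid_UX: "finite (set_pmf (iid_UX q m))"
  unfolding iid_UX_def by (simp add: finite_set_seq_pmf)

lemma iid_UXYZ_eq_subblock_gen:
  "iid_UXYZ q W (2^n) = subblock_gen n W
     (cond_bit (iid_UX q (2^n)) (\<lambda>c. polar n (fst c)) (\<lambda>_. ()) ())
     (cond_bit (iid_UX q (2^n)) (\<lambda>c. polar n (snd c)) fst)"
proof -
  define P where "P = iid_UX q (2^n)"
  define Y where "Y (u :: bool list) x = map_pmf (\<lambda>yz. (u, x, map fst yz, map snd yz)) (seq_pmf (map W x))" for u x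
  have len: "length (fst c) = 2^n" "length (snd c) = 2^n" if "c \<in> set_pmf P" for c
    using that length_iid_UX by (auto simp: P_def)
  have A: "map_pmf (\<lambda>c. polar n (fst c)) P = succ_gen (2^n) (cond_bit P (\<lambda>c. polar n (fst c)) (\<lambda>_. ()) ())"
    by (simp add: succ_gen_cond_bit_unit)
  have V: "bind_pmf (cond_pmf P {c. fst c = u}) (\<lambda>c. Y u (snd c))
      = bind_pmf (succ_gen (2^n) (cond_bit P (\<lambda>c. polar n (snd c)) fst u)) (\<lambda>v. Y u (polar n v))"
    if u: "u \<in> set_pmf (map_pmf fst P)" for u
  proof -
    have "set_pmf P \<inter> {c. fst c = u} \<noteq> {}" using u by auto
    then have "bind_pmf (cond_pmf P {c. fst c = u}) (\<lambda>c. Y u (snd c))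
        = bind_pmf (map_pmf (\<lambda>c. polar n (snd c)) (cond_pmf P {c. fst c = u})) (\<lambda>v. Y u (polar n v))"
      unfolding bind_map_pmf by (intro bind_pmf_cong refl) (simp add: len polar_polar)
    also have "\<dots> = bind_pmf (succ_gen (2^n) (cond_bit P (\<lambda>c. polar n (snd c)) fst u)) (\<lambda>v. Y u (polar n v))"
      using u len by (subst succ_gen_cond_bit_full) auto
    finally show ?thesis .
  qed
  have "iid_UXYZ q W (2^n) = bind_pmf P (\<lambda>c. Y (fst c) (snd c))"
    by (simp add: iid_UXYZ_eq_bind P_def Y_def split_def)
  also have "\<dots> = bind_pmf (map_pmf fst P) (\<lambda>u. bind_pmf (cond_pmf P {c. fst c = u}) (\<lambda>c. Y (fst c) (snd c)))"
    by (simp only: bind_assoc_pmf[symmetric] bind_cond_pmf_fibres)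
  also have "\<dots> = bind_pmf (map_pmf fst P) (\<lambda>u. bind_pmf (cond_pmf P {c. fst c = u}) (\<lambda>c. Y u (snd c)))"
  proof (intro bind_pmf_cong refl)
    fix u c assume "u \<in> set_pmf (map_pmf fst P)" "c \<in> set_pmf (cond_pmf P {c. fst c = u})"
    then show "Y (fst c) (snd c) = Y u (snd c)" by (subst (asm) set_cond_pmf) auto
  qed
  also have "\<dots> = bind_pmf (map_pmf (\<lambda>c. polar n (fst c)) P)
      (\<lambda>a. bind_pmf (succ_gen (2^n) (cond_bit P (\<lambda>c. polar n (snd c)) fst (polar n a))) (\<lambda>v. Y (polar n a) (polar n v)))"
    unfolding bind_map_pmf by (intro bind_pmf_cong refl) (simp_all add: V len polar_polar)
  also have "\<dots> = bind_pmf (succ_gen (2^n) (cond_bit P (\<lambda>c. polar n (fst c)) (\<lambda>_. ()) ()))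
      (\<lambda>a. bind_pmf (succ_gen (2^n) (cond_bit P (\<lambda>c. polar n (snd c)) fst (polar n a))) (\<lambda>v. Y (polar n a) (polar n v)))"
    by (simp only: A)
  finally show ?thesis
    unfolding subblock_gen_eq_bind Y_def P_def .
qed

lemma cond_ent_map_inj_snd:
  fixes J :: "('a \<times> 'b) pmf" and h :: "'b \<Rightarrow> 'c"
  assumes h: "inj h"
  shows "cond_ent (map_pmf (\<lambda>(a, b). (a, h b)) J) = cond_ent J"
proof -
  define g :: "'a \<times> 'b \<Rightarrow> 'a \<times> 'c" where "g = (\<lambda>(a, b). (a, h b))"
  have g: "inj g" using h by (auto simp: g_def inj_on_def)
  have snd_g: "snd (g x) = h (snd x)" for x by (simp add: g_def split_def)
  have "map_pmf snd (map_pmf g J) = map_pmf h (map_pmf snd J)"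
    by (simp add: map_pmf_comp snd_g)
  then have "cond_ent (map_pmf g J) = - (\<Sum>x\<in>set_pmf J. pmf (map_pmf g J) (g x) *
      log 2 (pmf (map_pmf g J) (g x) / pmf (map_pmf h (map_pmf snd J)) (snd (g x))))"
    unfolding cond_ent_def set_map_pmf using g by (simp add: sum.reindex inj_on_subset)
  also have "\<dots> = cond_ent J"
    by (simp add: cond_ent_def snd_g pmf_map_inj'[OF g] pmf_map_inj'[OF h])
  finally show ?thesis by (simp add: g_def)
qed

lemma sum_pmf_map_pmf_comp:
  assumes fin: "finite (set_pmf p)" and eq: "\<And>c. c \<in> set_pmf p \<Longrightarrow> g (f c) = h c"
  shows "(\<Sum>a\<in>set_pmf (map_pmf f p). pmf (map_pmf f p) a * G (g a)) = (\<Sum>u\<in>set_pmf (map_pmf h p). pmf (map_pmf h p) u * G u)"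
proof -
  have "(\<Sum>a\<in>set_pmf (map_pmf f p). pmf (map_pmf f p) a * G (g a)) = measure_pmf.expectation p (\<lambda>c. G (g (f c)))"
    using fin by (subst expectation_finite_pmf[symmetric]) simp_all
  also have "\<dots> = measure_pmf.expectation p (\<lambda>c. G (h c))"
    by (intro Bochner_Integration.integral_cong_AE AE_pmfI) (simp_all add: eq)
  also have "\<dots> = (\<Sum>u\<in>set_pmf (map_pmf h p). pmf (map_pmf h p) u * G u)"
    using fin by (subst expectation_finite_pmf[symmetric]) simp_all
  finally show ?thesis .
qed

lemma H_A_eq_cond_ent:
  "H_A q n i = cond_ent (map_pmf (\<lambda>c. (polar n (fst c) ! i, (take i (polar n (fst c)), ()))) (iid_UX q (2^n)))"
  using cond_ent_map_inj_snd[of "\<lambda>b. (b, ())" "map_pmf (\<lambda>c. (polar n (fst c) ! i, take i (polar n (fst c)))) (iid_UX q (2^n))"]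
  by (simp add: H_A_def map_pmf_comp split_def inj_on_def)

lemma H_V_eq_cond_ent:
  "H_V q n i = cond_ent (map_pmf (\<lambda>c. (polar n (snd c) ! i, (take i (polar n (snd c)), fst c))) (iid_UX q (2^n)))"
  by (simp add: H_V_def split_def)

lemma kl_div_subblock:
  fixes W :: "bool \<Rightarrow> ('y::finite \<times> 'z::finite) pmf"
  shows "finitely_dominated (iid_UXYZ q W (2^n)) (subblock q W n \<delta>)"
    and "kl_div (iid_UXYZ q W (2^n)) (subblock q W n \<delta>)
       = (\<Sum>i\<in>V_U q n \<delta>. 1 - H_A q n i) + (\<Sum>i\<in>V_XU q n \<delta>. 1 - H_V q n i)"
proof -
  define P where "P = iid_UX q (2^n)"
  define \<phi>\<^sub>A :: "bool list \<times> bool list \<Rightarrow> bool list" where "\<phi>\<^sub>A = (\<lambda>c. polar n (fst c))"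
  define \<phi>\<^sub>V :: "bool list \<times> bool list \<Rightarrow> bool list" where "\<phi>\<^sub>V = (\<lambda>c. polar n (snd c))"
  have fin: "finite (set_pmf P)" by (simp add: P_def finite_set_pmf_iid_UX)
  have len: "\<forall>c\<in>set_pmf P. length (\<phi>\<^sub>A c) = 2^n" "\<forall>c\<in>set_pmf P. length (\<phi>\<^sub>V c) = 2^n"
    by (simp_all add: \<phi>\<^sub>A_def \<phi>\<^sub>V_def)
  have VU: "V_U q n \<delta> \<subseteq> {..<2^n}" and VXU: "V_XU q n \<delta> \<subseteq> {..<2^n}"
    by (auto simp: V_U_def V_XU_def)
  note gen = kl_div_subblock_gen[of "cond_bit P \<phi>\<^sub>A (\<lambda>_. ()) ()" "frozen_cond_bit P \<phi>\<^sub>A (\<lambda>_. ()) (V_U q n \<delta>) ()"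
      "cond_bit P \<phi>\<^sub>V fst" "frozen_cond_bit P \<phi>\<^sub>V fst (V_XU q n \<delta>)" n W, OF set_cond_bit_subset set_cond_bit_subset]
  have eqs: "iid_UXYZ q W (2^n) = subblock_gen n W (cond_bit P \<phi>\<^sub>A (\<lambda>_. ()) ()) (cond_bit P \<phi>\<^sub>V fst)"
    "subblock q W n \<delta> = subblock_gen n W (frozen_cond_bit P \<phi>\<^sub>A (\<lambda>_. ()) (V_U q n \<delta>) ())
       (frozen_cond_bit P \<phi>\<^sub>V fst (V_XU q n \<delta>))"
    unfolding P_def \<phi>\<^sub>A_def \<phi>\<^sub>V_def
    by (rule iid_UXYZ_eq_subblock_gen subblock_eq_subblock_gen)+
  show "finitely_dominated (iid_UXYZ q W (2^n)) (subblock q W n \<delta>)"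
    unfolding eqs by (rule gen(1))
  have A: "kl_div (succ_gen (2^n) (cond_bit P \<phi>\<^sub>A (\<lambda>_. ()) ()))
      (succ_gen (2^n) (frozen_cond_bit P \<phi>\<^sub>A (\<lambda>_. ()) (V_U q n \<delta>) ())) = (\<Sum>i\<in>V_U q n \<delta>. 1 - H_A q n i)"
    using kl_div_succ_gen_frozen[OF fin len(1) VU, of "\<lambda>_. ()"]
    by (simp add: map_pmf_const H_A_eq_cond_ent P_def \<phi>\<^sub>A_def)
  have "(\<Sum>a\<in>set_pmf (succ_gen (2^n) (cond_bit P \<phi>\<^sub>A (\<lambda>_. ()) ())). pmf (succ_gen (2^n) (cond_bit P \<phi>\<^sub>A (\<lambda>_. ()) ())) a *
        kl_div (succ_gen (2^n) (cond_bit P \<phi>\<^sub>V fst (polar n a))) (succ_gen (2^n) (frozen_cond_bit P \<phi>\<^sub>V fst (V_XU q n \<delta>) (polar n a))))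
      = (\<Sum>u\<in>set_pmf (map_pmf fst P). pmf (map_pmf fst P) u *
        kl_div (succ_gen (2^n) (cond_bit P \<phi>\<^sub>V fst u)) (succ_gen (2^n) (frozen_cond_bit P \<phi>\<^sub>V fst (V_XU q n \<delta>) u)))"
    unfolding succ_gen_cond_bit_unit[OF len(1)]
    by (rule sum_pmf_map_pmf_comp[OF fin]) (auto simp: \<phi>\<^sub>A_def P_def polar_polar dest: length_iid_UX)
  also have "\<dots> = (\<Sum>i\<in>V_XU q n \<delta>. 1 - H_V q n i)"
    unfolding kl_div_succ_gen_frozen[OF fin len(2) VXU] by (simp add: H_V_eq_cond_ent P_def \<phi>\<^sub>V_def)
  finally show "kl_div (iid_UXYZ q W (2^n)) (subblock q W n \<delta>)
       = (\<Sum>i\<in>V_U q n \<delta>. 1 - H_A q n i) + (\<Sum>i\<in>V_XU q n \<delta>. 1 - H_V q n i)"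
    unfolding eqs gen(2) A by (rule arg_cong[where f = "(+) _"])
qed

lemma sum_entropy_deficit_le:
  fixes H :: "nat \<Rightarrow> real"
  assumes "0 \<le> \<delta>"
  shows "(\<Sum>i\<in>{i. i < K \<and> H i > 1 - \<delta>}. 1 - H i) \<le> real K * \<delta>"
proof -
  have "(\<Sum>i\<in>{i. i < K \<and> H i > 1 - \<delta>}. 1 - H i) \<le> (\<Sum>i\<in>{i. i < K \<and> H i > 1 - \<delta>}. \<delta>)"
    by (intro sum_mono) auto
  also have "\<dots> \<le> real K * \<delta>"
  proof -
    have "card {i. i < K \<and> H i > 1 - \<delta>} \<le> card {..<K}" by (rule card_mono) auto
    then show ?thesis using assms by (simp add: mult_right_mono)
  qed
  finally show ?thesis .
qed

lemma length_subblock: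
  "x \<in> set_pmf (subblock q W n \<delta>) \<Longrightarrow> length (fst x) = 2^n \<and> length (fst (snd x)) = 2^n
     \<and> length (fst (snd (snd x))) = 2^n \<and> length (snd (snd (snd x))) = 2^n"
  unfolding subblock_def Let_def by (auto dest!: length_seq_pmf)

lemma KL_block:
  fixes W :: "bool \<Rightarrow> ('y::finite \<times> 'z::finite) pmf"
  shows "KL (iid_UXYZ q W (2^n * L)) (block q W n \<delta> L)
       = ereal (real L * kl_div (iid_UXYZ q W (2^n)) (subblock q W n \<delta>))"
proof -
  have dom: "finitely_dominated (seq_pmf (replicate L (iid_UXYZ q W (2^n)))) (seq_pmf (replicate L (subblock q W n \<delta>)))"
    by (rule finitely_dominated_seq_pmf_replicate[OF kl_div_subblock(1)])
  have "inj_on concat4 (set_pmf (seq_pmf (replicate L (subblock q W n \<delta>))))"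
    by (rule inj_on_concat4) (use length_subblock in blast)
  with dom show ?thesis
    unfolding iid_UXYZ_mult block_concat4
    by (simp add: KL_eq_kl_div kl_div_map_pmf_inj kl_div_seq_pmf_replicate[OF kl_div_subblock(1)]
        finitely_dominated_def image_mono)
qed

theorem lemma2:
  fixes q :: "(bool \<times> bool) pmf"
    and W :: "bool \<Rightarrow> ('y::finite \<times> 'z::finite) pmf"
    and n L :: nat and \<beta> :: real
  assumes "0 < \<beta>" and "\<beta> < 1/2"
  defines "K \<equiv> (2::nat) ^ n"
  defines "N \<equiv> K * L"
  defines "\<delta> \<equiv> 2 powr (- (real K powr \<beta>))"
  shows "KL (iid_UXYZ q W N) (block q W n \<delta> L) \<le> ereal (2 * real L * real K * \<delta>)"
proof -
  \<comment> \<open>The bound holds for every \<open>\<delta> \<ge> 0\<close>.\<close>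
  have "0 \<le> \<delta>" by (simp add: \<delta>_def)
  from sum_entropy_deficit_le[OF this, of "H_A q n" "2^n"] sum_entropy_deficit_le[OF this, of "H_V q n" "2^n"]
  have sub: "kl_div (iid_UXYZ q W K) (subblock q W n \<delta>) \<le> 2 * real K * \<delta>"
    unfolding K_def kl_div_subblock(2) V_U_def V_XU_def by simp
  have "real L * kl_div (iid_UXYZ q W K) (subblock q W n \<delta>) \<le> 2 * real L * real K * \<delta>"
    using mult_left_mono[OF sub, of "real L"] by (simp add: algebra_simps)
  then show ?thesis
    by (simp add: N_def K_def KL_block)
qed

end
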